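(* Let $L\subset\mathbb R^n$ be a regular (embedded) surface of dimension $r$, $1\le r\le n-1$, which is a closed subset of $\mathbb R^n$. If the normal (affine) planes of $L$ at distinct points of $L$ are pairwise disjoint, then $L$ is an $r$-dimensional affine plane.
   Context: The normal plane of $L$ at $p\in L$ is the affine $(n-r)$-plane through $p$ orthogonal to $T_pL$. *)

theory Defs
  imports "HOL-Analysis.Analysis"
begin

fun iter_dd :: "('a::real_normed_vector \<Rightarrow> 'b::real_normed_vector) \<Rightarrow> 'a list \<Rightarrow> 'a \<Rightarrow> 'b" where
  "iter_dd f [] = f"
| "iter_dd f (v # vs) = (\<lambda>x. frechet_derivative (iter_dd f vs) (at x) v)"

definition smooth_on :: "'a::euclidean_space set \<Rightarrow> ('a \<Rightarrow> 'b::real_normed_vector) \<Rightarrow> bool" where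
  "smooth_on S f \<longleftrightarrow> (\<forall>vs. iter_dd f vs differentiable_on S)"

definition regular_submanifold :: "nat \<Rightarrow> 'a::euclidean_space set \<Rightarrow> bool" where
  "regular_submanifold r L \<longleftrightarrow>
    (\<forall>p\<in>L. \<exists>U V (\<psi>::'a \<Rightarrow> 'a) (\<phi>::'a \<Rightarrow> 'a) E.
        open U \<and> p \<in> U \<and> open V \<and> subspace E \<and> dim E = r \<and>
        smooth_on U \<psi> \<and> smooth_on V \<phi> \<and> \<psi> ` U = V \<and>
        (\<forall>x\<in>U. \<phi> (\<psi> x) = x) \<and> (\<forall>y\<in>V. \<psi> (\<phi> y) = y) \<and>
        \<psi> ` (L \<inter> U) = V \<inter> E)"

definition tangent_space :: "'a::euclidean_space set \<Rightarrow> 'a \<Rightarrow> 'a set" where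
  "tangent_space L p = {v. \<exists>\<gamma> e. e > 0 \<and> (\<forall>t\<in>ball 0 e. \<gamma> t \<in> L) \<and> \<gamma> 0 = p \<and>
                                (\<gamma> has_vector_derivative v) (at 0)}"

definition normal_plane :: "'a::euclidean_space set \<Rightarrow> 'a \<Rightarrow> 'a set" where
  "normal_plane L p = {x. \<forall>v\<in>tangent_space L p. (x - p) \<bullet> v = 0}"

end

theory Submission
  imports Defs
begin

(* Closedness gives every point x a nearest point p of L, and x lies on the
   normal plane at p (first-order condition for the squared distance).  Disjointness of
   the normal planes makes q the nearest point of L to every point of its own normal
   plane; pushing such a point far out along a normal direction w shows that no chord
   y - q (y in L) can have a nonzero component orthogonal to T_qL.  Hence the span of T_qL
   equals the span of all chords from q.  Now a point y of the affine hull of L, with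
   nearest point p, has y - p in the chord span at p, i.e. in span T_pL, while y - p is
   orthogonal to T_pL; so y = p and L is affine.  Finally, a slice chart at a point q of
   the affine set L = q + M has derivatives that are mutually inverse linear maps between
   M and the model subspace E, so aff_dim L = dim M = dim E = r. *)

(* A curve staying in a subspace near 0 has its velocity at 0 in that subspace: the
   component of the velocity orthogonal to the subspace is the derivative of a function
   that vanishes near 0. *)
lemma vector_derivative_in_subspace:
  fixes g :: "real \<Rightarrow> 'a::euclidean_space"
  assumes deriv: "(g has_vector_derivative v) (at 0)" and S: "subspace S"
    and near: "\<forall>\<^sub>F t in nhds 0. g t \<in> S"
  shows "v \<in> S"
proof -
  obtain m z where m: "m \<in> span S" and z: "\<And>w. w \<in> span S \<Longrightarrow> orthogonal z w"
    and v: "v = m + z"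
    using orthogonal_subspace_decomp_exists[of S v] by blast
  have "((\<lambda>t. z \<bullet> g t) has_real_derivative z \<bullet> v) (at 0)"
    using bounded_linear.has_vector_derivative[OF bounded_linear_inner_right deriv]
    by (simp add: has_real_derivative_iff_has_vector_derivative)
  moreover have "\<forall>\<^sub>F t in nhds 0. z \<bullet> g t = 0"
    using near by eventually_elim (use z span_base in \<open>auto simp: orthogonal_def\<close>)
  ultimately have "((\<lambda>t. 0) has_real_derivative z \<bullet> v) (at 0)"
    using DERIV_cong_ev[of 0 0 "\<lambda>t. z \<bullet> g t" "\<lambda>t. 0"] by simp
  then have "z \<bullet> v = 0" using DERIV_const DERIV_unique by blast
  moreover have "z \<bullet> m = 0" using z[OF m] by (simp add: orthogonal_def)
  ultimately have "z = 0" using v by (simp add: inner_add_right)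
  then show ?thesis using m v S by (metis add.right_neutral span_eq_iff)
qed

lemma tangent_space_subset_chords:
  fixes L :: "'a::euclidean_space set"
  shows "tangent_space L q \<subseteq> span ((\<lambda>x. x - q) ` L)"
proof
  fix v assume "v \<in> tangent_space L q"
  then obtain \<gamma> e where e: "e > 0" and in_L: "\<forall>t\<in>ball 0 e. \<gamma> t \<in> L" and start: "\<gamma> 0 = q"
    and vel: "(\<gamma> has_vector_derivative v) (at 0)"
    unfolding tangent_space_def by blast
  have chord_vel: "((\<lambda>t. \<gamma> t - q) has_vector_derivative v) (at 0)"
    using vel by (auto intro!: derivative_eq_intros)
  have "\<forall>\<^sub>F t in nhds 0. t \<in> ball 0 e"
    using e by (intro eventually_nhds_in_open) auto
  then have chord_near: "\<forall>\<^sub>F t in nhds 0. \<gamma> t - q \<in> span ((\<lambda>x. x - q) ` L)"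
    by eventually_elim (use in_L in \<open>auto intro: span_base\<close>)
  show "v \<in> span ((\<lambda>x. x - q) ` L)"
    using vector_derivative_in_subspace[OF chord_vel subspace_span chord_near] .
qed

(* A point x whose distance to L is attained at p lies on the normal plane at p: the
   squared distance to x along a curve through p has a local minimum at p. *)
lemma nearest_point_in_normal_plane:
  fixes L :: "'a::euclidean_space set"
  assumes nearest: "\<forall>l\<in>L. dist x p \<le> dist x l"
  shows "x \<in> normal_plane L p"
  unfolding normal_plane_def
proof (intro CollectI ballI)
  fix v assume "v \<in> tangent_space L p"
  then obtain \<gamma> e where e: "e > 0" and in_L: "\<forall>t\<in>ball 0 e. \<gamma> t \<in> L" and start: "\<gamma> 0 = p"
    and vel: "(\<gamma> has_vector_derivative v) (at 0)"
    unfolding tangent_space_def by blast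
  define f where "f t = (x - \<gamma> t) \<bullet> (x - \<gamma> t)" for t
  have "((\<lambda>t. x - \<gamma> t) has_vector_derivative - v) (at 0)"
    using vel by (auto intro!: derivative_eq_intros)
  from bounded_bilinear.has_vector_derivative[OF bounded_bilinear_inner this this]
  have "(f has_real_derivative -2 * ((x - p) \<bullet> v)) (at 0)"
    by (simp add: f_def [abs_def] start has_real_derivative_iff_has_vector_derivative inner_commute)
  moreover have "f 0 \<le> f t" if "\<bar>0 - t\<bar> < e" for t
  proof -
    have "dist x p \<le> dist x (\<gamma> t)" using nearest in_L that by auto
    then show ?thesis
      by (simp add: f_def start dist_norm power_mono flip: power2_norm_eq_inner)
  qed
  ultimately have "-2 * ((x - p) \<bullet> v) = 0" using DERIV_local_min[OF _ e] by blast
  then show "(x - p) \<bullet> v = 0" by simp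
qed

definition disjoint_normal_planes :: "'a::euclidean_space set \<Rightarrow> bool" where
  "disjoint_normal_planes L \<longleftrightarrow>
     (\<forall>p\<in>L. \<forall>q\<in>L. p \<noteq> q \<longrightarrow> normal_plane L p \<inter> normal_plane L q = {})"

lemma nearest_point_exists:
  fixes L :: "'a::euclidean_space set"
  assumes "closed L" "L \<noteq> {}"
  obtains p where "p \<in> L" "\<forall>l\<in>L. dist x p \<le> dist x l" "x \<in> normal_plane L p"
  using distance_attains_inf[OF assms, of x] nearest_point_in_normal_plane by metis

(* Otherwise its component w orthogonal to T_qL gives a point q + c w of the normal plane
   at q whose nearest point must be q, yet for large c the point y is nearer. *)
lemma chord_in_tangent_span:
  fixes L :: "'a::euclidean_space set"
  assumes closed: "closed L" and disjoint: "disjoint_normal_planes L"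
    and q: "q \<in> L" and y: "y \<in> L"
  shows "y - q \<in> span (tangent_space L q)"
proof -
  obtain s w where s: "s \<in> span (tangent_space L q)"
    and w: "\<And>v. v \<in> span (tangent_space L q) \<Longrightarrow> orthogonal w v"
    and split: "y - q = s + w"
    using orthogonal_subspace_decomp_exists[of "tangent_space L q" "y - q"] by blast
  have "w = 0"
  proof (rule ccontr)
    assume "w \<noteq> 0"
    then have ww: "w \<bullet> w > 0" by simp
    define u where "u = y - q"
    define c where "c = (u \<bullet> u) / (w \<bullet> w) + 1"
    define x where "x = q + c *\<^sub>R w"
    have "x \<in> normal_plane L q"
      using w span_base by (auto simp: normal_plane_def x_def orthogonal_def)
    moreover obtain p where p: "p \<in> L" "\<forall>l\<in>L. dist x p \<le> dist x l" "x \<in> normal_plane L p"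
      using nearest_point_exists[OF closed] q by blast
    ultimately have "p = q"
      using disjoint q unfolding disjoint_normal_planes_def by blast
    then have "dist x q \<le> dist x y" using p(2) y by blast
    then have "norm (c *\<^sub>R w) \<le> norm (c *\<^sub>R w - u)"
      by (simp add: dist_norm x_def u_def algebra_simps)
    then have "(c *\<^sub>R w) \<bullet> (c *\<^sub>R w) \<le> (c *\<^sub>R w - u) \<bullet> (c *\<^sub>R w - u)"
      by (simp only: flip: power2_norm_eq_inner) (simp add: power_mono)
    moreover have "w \<bullet> u = w \<bullet> w"
      using w[OF s] split by (simp add: u_def orthogonal_def inner_add_right)
    ultimately have "2 * (c * (w \<bullet> w)) \<le> u \<bullet> u"
      by (simp add: inner_diff_left inner_diff_right inner_commute algebra_simps)
    moreover have "c * (w \<bullet> w) = u \<bullet> u + w \<bullet> w"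
      using ww by (simp add: c_def field_simps)
    ultimately show False using ww inner_ge_zero[of u] by linarith
  qed
  then show ?thesis using s split by simp
qed

lemma span_tangent_space_eq_chords:
  fixes L :: "'a::euclidean_space set"
  assumes "closed L" "disjoint_normal_planes L" "q \<in> L"
  shows "span (tangent_space L q) = span ((\<lambda>x. x - q) ` L)"
proof
  show "span (tangent_space L q) \<subseteq> span ((\<lambda>x. x - q) ` L)"
    by (intro span_minimal tangent_space_subset_chords subspace_span)
  show "span ((\<lambda>x. x - q) ` L) \<subseteq> span (tangent_space L q)"
    using chord_in_tangent_span[OF assms] by (intro span_minimal subspace_span) blast
qed

(* A closed set with disjoint normal planes is affine: every point y of its affine hull
   coincides with its nearest point p, since y - p is both in span T_pL and orthogonal
   to it. *)
lemma affine_if_disjoint_normal_planes: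
  fixes L :: "'a::euclidean_space set"
  assumes closed: "closed L" and disjoint: "disjoint_normal_planes L"
  shows "affine L"
proof -
  have "y \<in> L" if y: "y \<in> affine hull L" for y
  proof -
    have "L \<noteq> {}" using y by auto
    then obtain p where p: "p \<in> L" "y \<in> normal_plane L p"
      using nearest_point_exists[OF closed] by metis
    have "y - p \<in> span ((\<lambda>x. x - p) ` L)"
      using y diffs_affine_hull_span[OF p(1)] by blast
    then have in_span: "y - p \<in> span (tangent_space L p)"
      using span_tangent_space_eq_chords[OF closed disjoint p(1)] by simp
    have "orthogonal (y - p) v" if "v \<in> tangent_space L p" for v
      using p(2) that by (simp add: normal_plane_def orthogonal_def)
    then have "orthogonal (y - p) (y - p)"
      using orthogonal_to_span[OF in_span] by blast
    then show "y \<in> L" using p(1) by (simp add: orthogonal_def)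
  qed
  then have "affine hull L = L" using hull_subset[of L affine] by blast
  then show ?thesis by simp
qed

(* If f maps a + S (near a) into f a + T, then its derivative at a maps S into T:
   differentiate f along the lines a + t v. *)
lemma derivative_preserves_subspace:
  fixes f :: "'a::euclidean_space \<Rightarrow> 'b::euclidean_space"
  assumes deriv: "(f has_derivative Df) (at a)" and U: "open U" "a \<in> U"
    and S: "subspace S" and T: "subspace T"
    and maps: "\<And>w. w \<in> S \<Longrightarrow> a + w \<in> U \<Longrightarrow> f (a + w) - f a \<in> T"
    and v: "v \<in> S"
  shows "Df v \<in> T"
proof -
  have line: "((\<lambda>t. a + t *\<^sub>R v) has_derivative (\<lambda>t. t *\<^sub>R v)) (at 0)"
    by (auto intro!: derivative_eq_intros)
  have "((\<lambda>t. f (a + t *\<^sub>R v) - f a) has_derivative (\<lambda>t. Df (t *\<^sub>R v))) (at 0)"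
    using diff_chain_at[OF line, of f Df] deriv
    by (auto simp: o_def intro!: derivative_eq_intros)
  then have vel: "((\<lambda>t. f (a + t *\<^sub>R v) - f a) has_vector_derivative Df v) (at 0)"
    using linear_scale[OF has_derivative_linear[OF deriv]]
    by (simp add: has_vector_derivative_def)
  have "((\<lambda>t. a + t *\<^sub>R v) \<longlongrightarrow> a) (nhds 0)"
    by (auto intro!: tendsto_eq_intros filterlim_ident)
  then have "\<forall>\<^sub>F t in nhds 0. a + t *\<^sub>R v \<in> U"
    using U by (rule topological_tendstoD)
  then have "\<forall>\<^sub>F t in nhds 0. f (a + t *\<^sub>R v) - f a \<in> T"
    by eventually_elim (use S v in \<open>auto intro: maps subspace_scale\<close>)
  then show ?thesis using vector_derivative_in_subspace[OF vel T] by blast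
qed

lemma derivative_of_left_inverse:
  fixes f :: "'a::euclidean_space \<Rightarrow> 'b::euclidean_space"
  assumes Df: "(f has_derivative Df) (at a)" and Dg: "(g has_derivative Dg) (at (f a))"
    and U: "open U" "a \<in> U" and inverse: "\<And>x. x \<in> U \<Longrightarrow> g (f x) = x"
  shows "Dg (Df v) = v"
proof -
  have "(g \<circ> f has_derivative Dg \<circ> Df) (at a)"
    using diff_chain_at[OF Df Dg] .
  then have "((\<lambda>x. x) has_derivative Dg \<circ> Df) (at a)"
    by (rule has_derivative_transform_within_open[OF _ U]) (simp add: inverse)
  then have "Dg \<circ> Df = (\<lambda>x. x)"
    using has_derivative_unique[OF _ has_derivative_ident] by blast
  then show ?thesis by (simp add: fun_eq_iff)
qed

lemma dim_le_if_left_inverse: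
  fixes f :: "'a::euclidean_space \<Rightarrow> 'b::euclidean_space"
  assumes "linear f" "linear g" "\<And>v. g (f v) = v" "f ` S \<subseteq> T"
  shows "dim S \<le> dim T"
proof -
  have "g ` f ` S = S" using assms(3) by (force simp: image_image)
  then have "dim S \<le> dim (f ` S)" using dim_image_le[OF assms(2), of "f ` S"] by simp
  also have "\<dots> \<le> dim T" using dim_subset[OF assms(4)] .
  finally show ?thesis .
qed

lemma smooth_on_imp_differentiable_on:
  assumes "smooth_on S f"
  shows "f differentiable_on S"
  using assms unfolding smooth_on_def by (metis iter_dd.simps(1))

(* An affine set that is a regular r-dimensional submanifold has affine dimension r:
   the derivatives of a slice chart at q identify the direction space M of L with the
   r-dimensional model subspace E. *)
lemma aff_dim_affine_regular_submanifold:
  fixes L :: "'a::euclidean_space set"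
  assumes regular: "regular_submanifold r L" and affine: "affine L" and q: "q \<in> L"
  shows "aff_dim L = int r"
proof -
  obtain U V E and \<psi> \<phi> :: "'a \<Rightarrow> 'a" where
    U: "open U" "q \<in> U" and V: "open V" and E: "subspace E" "dim E = r"
    and smooth: "smooth_on U \<psi>" "smooth_on V \<phi>"
    and inv_U: "\<forall>x\<in>U. \<phi> (\<psi> x) = x" and inv_V: "\<forall>y\<in>V. \<psi> (\<phi> y) = y"
    and slice: "\<psi> ` (L \<inter> U) = V \<inter> E"
    using regular q unfolding regular_submanifold_def by metis
  define M where "M = (\<lambda>x. x - q) ` L"
  have M: "subspace M" unfolding M_def using affine q by (rule affine_diffs_subspace_subtract)
  have aff_dim_L: "aff_dim L = int (dim M)"
    unfolding M_def using q by (intro aff_dim_eq_dim_subtract hull_inc)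
  define a where "a = \<psi> q"
  have a: "a \<in> V" "a \<in> E" "\<phi> a = q"
    using slice q U(2) inv_U unfolding a_def by auto
  obtain D\<psi> where D\<psi>: "(\<psi> has_derivative D\<psi>) (at q)"
    using smooth_on_imp_differentiable_on[OF smooth(1)] U
    by (metis differentiable_def differentiable_on_eq_differentiable_at)
  obtain D\<phi> where D\<phi>: "(\<phi> has_derivative D\<phi>) (at a)"
    using smooth_on_imp_differentiable_on[OF smooth(2)] V a(1)
    by (metis differentiable_def differentiable_on_eq_differentiable_at)
  have left_inv: "D\<phi> (D\<psi> v) = v" for v
    using derivative_of_left_inverse[OF D\<psi> _ U] D\<phi> inv_U unfolding a_def by blast
  have right_inv: "D\<psi> (D\<phi> v) = v" for v
    using derivative_of_left_inverse[OF D\<phi> _ V a(1)] D\<psi> inv_V a(3) by auto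
  have "D\<psi> v \<in> E" if "v \<in> M" for v
  proof (rule derivative_preserves_subspace[OF D\<psi> U M E(1) _ that])
    fix w assume "w \<in> M" "q + w \<in> U"
    then have "\<psi> (q + w) \<in> V \<inter> E" unfolding slice[symmetric] M_def by auto
    then show "\<psi> (q + w) - \<psi> q \<in> E" using E(1) a(2) unfolding a_def by (simp add: subspace_diff)
  qed
  then have "dim M \<le> dim E"
    using dim_le_if_left_inverse has_derivative_linear D\<psi> D\<phi> left_inv by (metis image_subsetI)
  have "D\<phi> v \<in> M" if "v \<in> E" for v
  proof (rule derivative_preserves_subspace[OF D\<phi> V a(1) E(1) M _ that])
    fix w assume "w \<in> E" "a + w \<in> V"
    then have "a + w \<in> \<psi> ` (L \<inter> U)" unfolding slice using E(1) a(2) by (simp add: subspace_add)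
    then obtain x where "x \<in> L" "x \<in> U" "a + w = \<psi> x" by blast
    then show "\<phi> (a + w) - \<phi> a \<in> M" unfolding M_def using inv_U a(3) by auto
  qed
  then have "dim E \<le> dim M"
    using dim_le_if_left_inverse has_derivative_linear D\<psi> D\<phi> right_inv by (metis image_subsetI)
  with \<open>dim M \<le> dim E\<close> show ?thesis using aff_dim_L E(2) by simp
qed

theorem theorem1p16:
  fixes L :: "'a::euclidean_space set" and r :: nat
  assumes "1 \<le> r" and "r \<le> DIM('a) - 1"
    and "regular_submanifold r L"
    and "L \<noteq> {}"
    and "closed L"
    and "\<forall>p\<in>L. \<forall>q\<in>L. p \<noteq> q \<longrightarrow> normal_plane L p \<inter> normal_plane L q = {}"
  shows "affine L \<and> aff_dim L = int r"
proof -
  have affine: "affine L"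
    using affine_if_disjoint_normal_planes assms(5,6) unfolding disjoint_normal_planes_def by blast
  obtain q where "q \<in> L" using assms(4) by blast
  then show ?thesis using aff_dim_affine_regular_submanifold[OF assms(3) affine] affine by blast
qed

end
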